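(* Let $m\ge2$ and let $\mathcal{H}_{2m}$ be as defined in the context. For generic $x_1,\ldots,x_{m-1},x_{m+1},\ldots,x_{2m-1},x$, the limit of $\mathcal{H}_{2m}(x_1,\ldots,x_{m-1},x,x_{m+1},\ldots,x_{2m-1},y)$ as $y\to x+\eta$ exists and equals \[ \prod_{i\in\{1,\ldots,m-1\}\cup\{m+1,\ldots,2m-1\}}\theta(x-\eta-x_i)\theta(x-\eta+x_i)\ \cdot\ \mathcal{H}_{2m-2}(x_1,\ldots,x_{m-1},x_{m+1},\ldots,x_{2m-1}), \] where in $\mathcal{H}_{2m-2}$ the first group of variables is $x_1,\ldots,x_{m-1}$ and the second group is $x_{m+1},\ldots,x_{2m-1}$.
   Context: Theta functions: for $|q|<1$, $\theta_1(x;q)=2\sum_{n\ge0}(-1)^nq^{(n+1/2)^2}\sin((2n+1)x)$. Fix $p=e^{i\pi\tau}$ with $\operatorname{Im}\tau>0$, write $\theta(x)=\theta_1(x;p)$, set $\eta=\pi/3$, and $h(x,y)=\theta(\eta+x-y)\theta(\eta+x+y)\theta(\eta-x-y)\theta(\eta-x+y)$. For $k\ge1$, \[ \mathcal{H}_{2k}(x_1,\ldots,x_{2k})=\frac{\prod_{i=1}^k\prod_{j=k+1}^{2k}h(x_i,x_j)}{\prod_{1\le i<j\le k}\theta(x_i-x_j)\theta(x_i+x_j)\prod_{k+1\le i<j\le 2k}\theta(x_i-x_j)\theta(x_i+x_j)}\ \det_{1\le i\le k,\ k+1\le j\le 2k}\frac{1}{h(x_i,x_j)}, \] the first group of variables being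 $x_1,\ldots,x_k$ and the second $x_{k+1},\ldots,x_{2k}$. *)

theory Defs
  imports "HOL-Analysis.Analysis"
begin

text \<open>Jacobi theta function theta_1(z; p) with nome p = exp(i pi tau), where
  q^((n+1/2)^2) is read as exp(i pi tau (n+1/2)^2).\<close>
definition theta1 :: "complex \<Rightarrow> complex \<Rightarrow> complex" where
  "theta1 \<tau> z = 2 * (\<Sum>n. (-1) ^ n * exp (\<i> * complex_of_real pi * \<tau> * (of_nat n + 1/2) ^ 2)
                          * sin ((2 * of_nat n + 1) * z))"

definition eta :: complex where
  "eta = complex_of_real (pi / 3)"

definition hfun :: "complex \<Rightarrow> complex \<Rightarrow> complex \<Rightarrow> complex" where
  "hfun \<tau> x y = theta1 \<tau> (eta + x - y) * theta1 \<tau> (eta + x + y) *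
                 theta1 \<tau> (eta - x - y) * theta1 \<tau> (eta - x + y)"

definition det_nat :: "nat \<Rightarrow> (nat \<Rightarrow> nat \<Rightarrow> complex) \<Rightarrow> complex" where
  "det_nat k M = (\<Sum>\<sigma> | \<sigma> permutes {..<k}. of_int (sign \<sigma>) * (\<Prod>i<k. M i (\<sigma> i)))"

text \<open>H_{2k} with first group of variables a 0, ..., a (k-1) and
  second group b 0, ..., b (k-1).\<close>
definition H :: "complex \<Rightarrow> nat \<Rightarrow> (nat \<Rightarrow> complex) \<Rightarrow> (nat \<Rightarrow> complex) \<Rightarrow> complex" where
  "H \<tau> k a b =
     (\<Prod>i<k. \<Prod>j<k. hfun \<tau> (a i) (b j)) /
     ((\<Prod>i<k. \<Prod>j\<in>{i<..<k}. theta1 \<tau> (a i - a j) * theta1 \<tau> (a i + a j)) *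
      (\<Prod>i<k. \<Prod>j\<in>{i<..<k}. theta1 \<tau> (b i - b j) * theta1 \<tau> (b i + b j))) *
     det_nat k (\<lambda>i j. 1 / hfun \<tau> (a i) (b j))"

end

theory Submission
  imports Defs "HOL-Complex_Analysis.Complex_Analysis" "HOL-Real_Asymp.Real_Asymp"
begin

text \<open>
  Only the last column of the determinant depends on y, and only its bottom entry
  1 / h(x, y) has a pole at y = x + eta, since h(x, x + eta) contains theta1 0 = 0.
  Multiplying the determinant by h(x, y) and expanding it along the last index, all terms
  except the leading minor are multiplied by h(x, y) and vanish in the limit
  (det_pole_limit). The factor h(x, y) is supplied by the numerator of H, and the remaining
  prefactor is evaluated with the quasi-periodicity of theta1 (hfun_at_shifted_point,
  hfun_at_base_point); after cancellation it is exactly the product in the theorem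
  (H_limit_at_shift).

  Genericity is made precise by an exceptional set: a finite union of zero sets
  theta1(c + w p +- w q) = 0. These are closed because theta1 is entire, and have empty
  interior because a nonzero entire function has isolated zeros. If theta1 vanishes
  identically, both sides of the limit are zero and no exceptional set is needed.
\<close>

section \<open>Jacobi theta series: convergence and holomorphy\<close>

definition theta_coeff :: "complex \<Rightarrow> nat \<Rightarrow> complex" where
  "theta_coeff \<tau> n = (-1) ^ n * exp (\<i> * complex_of_real pi * \<tau> * (of_nat n + 1/2) ^ 2)"

lemma theta1_eq_suminf:
  "theta1 \<tau> z = 2 * (\<Sum>n. theta_coeff \<tau> n * sin ((2 * of_nat n + 1) * z))"
  by (simp add: theta1_def theta_coeff_def)

lemma norm_theta_coeff: "norm (theta_coeff \<tau> n) = exp (- pi * Im \<tau> * (real n + 1/2)^2)"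
proof -
  have "(of_nat n + 1/2 :: complex)^2 = of_real ((real n + 1/2)^2)" by simp
  then show ?thesis by (simp add: theta_coeff_def norm_mult norm_power norm_exp_eq_Re)
qed

text \<open>A Gaussian beats any exponential: this dominates the theta series on bounded sets.\<close>

lemma gaussian_times_exponential_summable:
  fixes c R :: real assumes "c > 0"
  shows "summable (\<lambda>n. exp (- c * (real n + 1/2)^2) * exp ((2 * real n + 1) * R))"
proof (rule summable_comparison_test_bigo)
  show "summable (\<lambda>n. norm (exp (- real n)))"
    using summable_geometric[of "exp (-1) :: real"] by (simp add: exp_of_nat_mult[symmetric])
  show "(\<lambda>n. exp (- c * (real n + 1/2)^2) * exp ((2 * real n + 1) * R)) \<in> O(\<lambda>n. exp (- real n))"
    unfolding exp_add[symmetric] using assms by real_asymp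
qed

lemma norm_sin_le_exp_norm: "norm (sin (z::complex)) \<le> exp (norm z)"
proof -
  have "norm (sin z) = norm (exp (\<i> * z) - exp (- (\<i> * z))) / 2"
    by (simp add: sin_exp_eq norm_divide norm_mult)
  also have "\<dots> \<le> (norm (exp (\<i> * z)) + norm (exp (- (\<i> * z)))) / 2"
    by (intro divide_right_mono norm_triangle_ineq4) auto
  also have "\<dots> = (exp (- Im z) + exp (Im z)) / 2" by simp
  also have "\<dots> \<le> (exp (norm z) + exp (norm z)) / 2"
    using abs_Im_le_cmod[of z] by (intro divide_right_mono add_mono) auto
  finally show ?thesis by simp
qed

lemma theta_term_bound:
  "norm (theta_coeff \<tau> n * sin ((2 * of_nat n + 1) * z))
     \<le> exp (- pi * Im \<tau> * (real n + 1/2)^2) * exp ((2 * real n + 1) * norm z)"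
proof -
  have "(2 * of_nat n + 1 :: complex) = of_nat (2 * n + 1)" by simp
  then have "norm (2 * of_nat n + 1 :: complex) = 2 * real n + 1"
    by (simp only: norm_of_nat)
  then have "norm (sin ((2 * of_nat n + 1) * z)) \<le> exp ((2 * real n + 1) * norm z)"
    using norm_sin_le_exp_norm[of "(2 * of_nat n + 1) * z"] by (simp add: norm_mult)
  then show ?thesis by (simp add: norm_mult norm_theta_coeff mult_left_mono)
qed

text \<open>The theta series converges locally uniformly, so theta1 is entire.\<close>

lemma theta_holomorphic:
  assumes "Im \<tau> > 0"
  shows "theta1 \<tau> holomorphic_on UNIV"
proof -
  define f where "f n z = theta_coeff \<tau> n * sin ((2 * of_nat n + 1) * z)" for n z
  define f' where "f' n z = theta_coeff \<tau> n * ((2 * of_nat n + 1) * cos ((2 * of_nat n + 1) * z))" for n z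
  have deriv: "(f n has_field_derivative f' n z) (at z)" for n z
    unfolding f_def f'_def by (auto intro!: derivative_eq_intros)
  have local_bound: "\<exists>d h. 0 < d \<and> summable h \<and>
      (\<forall>\<^sub>F n in sequentially. \<forall>y\<in>ball z d \<inter> UNIV. norm (f n y) \<le> h n)" for z
  proof (intro exI conjI)
    show "summable (\<lambda>n. exp (- pi * Im \<tau> * (real n + 1/2)^2) * exp ((2 * real n + 1) * (norm z + 1)))"
      using gaussian_times_exponential_summable[of "pi * Im \<tau>" "norm z + 1"] assms by simp
    show "\<forall>\<^sub>F n in sequentially. \<forall>y\<in>ball z 1 \<inter> UNIV.
        norm (f n y) \<le> exp (- pi * Im \<tau> * (real n + 1/2)^2) * exp ((2 * real n + 1) * (norm z + 1))"
    proof (intro always_eventually allI ballI)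
      fix n y assume "y \<in> ball z 1 \<inter> UNIV"
      then have "norm y \<le> norm z + 1"
        using norm_triangle_ineq2[of y z] by (simp add: dist_norm norm_minus_commute)
      then have "exp ((2 * real n + 1) * norm y) \<le> exp ((2 * real n + 1) * (norm z + 1))"
        by (simp add: mult_left_mono)
      then show "norm (f n y) \<le> exp (- pi * Im \<tau> * (real n + 1/2)^2) * exp ((2 * real n + 1) * (norm z + 1))"
        using theta_term_bound[of \<tau> n y] unfolding f_def
        by (meson exp_ge_zero mult_left_mono order_trans)
    qed
  qed simp
  obtain g g' where g: "\<And>z. (\<lambda>n. f n z) sums g z \<and> (g has_field_derivative g' z) (at z)"
    using series_and_derivative_comparison_local[OF open_UNIV deriv local_bound] by blast
  have "theta1 \<tau> = (\<lambda>z. 2 * g z)"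
    using g by (auto simp: theta1_eq_suminf f_def sums_iff)
  moreover have "g holomorphic_on UNIV"
    using g by (auto simp: holomorphic_on_open)
  then have "(\<lambda>z. 2 * g z) holomorphic_on UNIV"
    by (intro holomorphic_intros)
  ultimately show ?thesis by simp
qed

lemma theta_series_summable: "summable (\<lambda>n. theta_coeff \<tau> n * sin ((2 * of_nat n + 1) * z))"
  if "Im \<tau> > 0"
proof (rule summable_comparison_test')
  show "summable (\<lambda>n. exp (- (pi * Im \<tau>) * (real n + 1/2)^2) * exp ((2 * real n + 1) * norm z))"
    using that by (intro gaussian_times_exponential_summable) simp
qed (use theta_term_bound in simp)

section \<open>Symmetries of theta1 and of h\<close>

lemma theta_odd:
  assumes "Im \<tau> > 0"
  shows "theta1 \<tau> (- z) = - theta1 \<tau> z"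
  using suminf_minus[OF theta_series_summable[OF assms, of z]] by (simp add: theta1_eq_suminf)

text \<open>theta1 is anti-periodic with period pi; since eta = pi/3 this gives the shift by 2 eta.\<close>

lemma theta_shift_pi:
  fixes z :: complex
  assumes "Im \<tau> > 0"
  shows "theta1 \<tau> (z + complex_of_real pi) = - theta1 \<tau> z"
proof -
  have "sin ((2 * of_nat n + 1) * (z + complex_of_real pi)) = - sin ((2 * of_nat n + 1) * z)" for n
  proof -
    have "(2 * of_nat n + 1) * (z + complex_of_real pi) = (2 * of_nat n + 1) * z + of_real (real (2 * n + 1) * pi)"
      by (simp add: algebra_simps)
    then show ?thesis by (simp only: sin_add sin_of_real cos_of_real sin_npi cos_npi) simp
  qed
  then show ?thesis
    using suminf_minus[OF theta_series_summable[OF assms, of z]] by (simp add: theta1_eq_suminf)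
qed

lemma theta_shift_two_eta:
  assumes "Im \<tau> > 0"
  shows "theta1 \<tau> (z + 2 * eta) = - theta1 \<tau> (z - eta)"
  using theta_shift_pi[OF assms, of "z - eta"] by (simp add: eta_def algebra_simps)

lemma theta_zero: "theta1 \<tau> 0 = 0"
  by (simp add: theta1_def)

text \<open>At y = x + eta the four theta factors of h(u, y) regroup into the factors of the theorem.\<close>

lemma hfun_at_shifted_point:
  assumes "Im \<tau> > 0"
  shows "hfun \<tau> u (x + eta) = - (theta1 \<tau> (u - x) * theta1 \<tau> (u + x))
            * (theta1 \<tau> (x - eta - u) * theta1 \<tau> (x - eta + u))"
proof -
  have "theta1 \<tau> (eta + u + (x + eta)) = - theta1 \<tau> (x - eta + u)"
    using theta_shift_two_eta[OF assms, of "u + x"] by (simp add: algebra_simps)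
  moreover have "theta1 \<tau> (eta - u - (x + eta)) = - theta1 \<tau> (u + x)"
    using theta_odd[OF assms, of "u + x"] by (simp add: algebra_simps)
  moreover have "theta1 \<tau> (eta - u + (x + eta)) = - theta1 \<tau> (x - eta - u)"
    using theta_shift_two_eta[OF assms, of "x - u"] by (simp add: algebra_simps)
  ultimately show ?thesis by (simp add: hfun_def algebra_simps)
qed

text \<open>The same regrouping for h(x, u); the factor theta1(x - eta - u) theta1(x - eta + u)
  reappears.\<close>

lemma hfun_at_base_point:
  assumes "Im \<tau> > 0"
  shows "hfun \<tau> x u = - (theta1 \<tau> (u - (x + eta)) * theta1 \<tau> (u + (x + eta)))
            * (theta1 \<tau> (x - eta - u) * theta1 \<tau> (x - eta + u))"
proof -
  have "theta1 \<tau> (eta + x - u) = - theta1 \<tau> (u - (x + eta))"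
    using theta_odd[OF assms, of "eta + x - u"] by (simp add: algebra_simps)
  moreover have "theta1 \<tau> (eta - x - u) = - theta1 \<tau> (x - eta + u)"
    using theta_odd[OF assms, of "x - eta + u"] by (simp add: algebra_simps)
  moreover have "theta1 \<tau> (eta - x + u) = - theta1 \<tau> (x - eta - u)"
    using theta_odd[OF assms, of "x - eta - u"] by (simp add: algebra_simps)
  ultimately show ?thesis by (simp add: hfun_def algebra_simps)
qed

lemma hfun_pole: "hfun \<tau> x (x + eta) = 0"
  by (simp add: hfun_def theta_zero)

section \<open>Isolated zeros\<close>

definition zeros_isolated :: "(complex \<Rightarrow> complex) \<Rightarrow> bool" where
  "zeros_isolated f \<longleftrightarrow> (\<forall>z. \<forall>\<^sub>F y in at z. f y \<noteq> 0)"

lemma entire_zeros_isolated: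
  assumes "f holomorphic_on UNIV" and "f z0 \<noteq> 0"
  shows "zeros_isolated f"
  using non_zero_neighbour_alt[OF assms(1) open_UNIV connected_UNIV _ _ assms(2)]
  by (simp add: zeros_isolated_def)

lemma zeros_isolated_affine:
  assumes "zeros_isolated f" and "s \<noteq> 0"
  shows "\<forall>\<^sub>F t in at t0. f (\<alpha> + s * t) \<noteq> 0"
proof -
  have "filterlim (\<lambda>t. \<alpha> + s * t) (at (\<alpha> + s * t0)) (at t0)"
  proof (rule filterlim_atI)
    show "((\<lambda>t. \<alpha> + s * t) \<longlongrightarrow> \<alpha> + s * t0) (at t0)"
      by (intro tendsto_intros)
    show "\<forall>\<^sub>F t in at t0. \<alpha> + s * t \<noteq> \<alpha> + s * t0"
      using assms(2) by (auto simp: eventually_at_filter)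
  qed
  then show ?thesis
    using assms(1) by (auto simp: zeros_isolated_def intro: eventually_compose_filterlim)
qed

lemma isCont_theta [continuous_intros]:
  assumes "Im \<tau> > 0" and "isCont f y"
  shows "isCont (\<lambda>y. theta1 \<tau> (f y)) y"
proof -
  have "isCont (theta1 \<tau>) (f y)"
    using holomorphic_on_imp_continuous_on[OF theta_holomorphic[OF assms(1)]]
    by (simp add: continuous_on_eq_continuous_at)
  with assms(2) show ?thesis by (rule isCont_o2)
qed

lemma hfun_eventually_nonzero:
  assumes "zeros_isolated (theta1 \<tau>)"
  shows "\<forall>\<^sub>F y in at y0. hfun \<tau> x y \<noteq> 0"
proof -
  have "\<forall>\<^sub>F y in at y0. theta1 \<tau> ((eta + x) + (-1) * y) \<noteq> 0 \<and> theta1 \<tau> ((eta + x) + 1 * y) \<noteq> 0 \<and>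
      theta1 \<tau> ((eta - x) + (-1) * y) \<noteq> 0 \<and> theta1 \<tau> ((eta - x) + 1 * y) \<noteq> 0"
    by (intro eventually_conj zeros_isolated_affine[OF assms]) simp_all
  then show ?thesis by eventually_elim (simp add: hfun_def)
qed

section \<open>Expansion of a determinant with a single pole\<close>

lemma permutes_fix_last:
  "(\<sigma> permutes {..<Suc n} \<and> \<sigma> n = n) \<longleftrightarrow> \<sigma> permutes {..<n}"
proof
  assume \<sigma>: "\<sigma> permutes {..<Suc n} \<and> \<sigma> n = n"
  show "\<sigma> permutes {..<n}"
    unfolding permutes_def
  proof (intro conjI allI impI)
    fix x assume "x \<notin> {..<n}"
    then show "\<sigma> x = x" using \<sigma> permutes_not_in[of \<sigma> "{..<Suc n}" x] by (cases "x = n") auto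
  next
    fix y show "\<exists>!x. \<sigma> x = y" using \<sigma> by (simp add: permutes_def)
  qed
next
  assume "\<sigma> permutes {..<n}"
  then show "\<sigma> permutes {..<Suc n} \<and> \<sigma> n = n"
    by (auto intro: permutes_subset permutes_not_in)
qed

lemma det_nat_cong:
  assumes "\<And>i j. i < n \<Longrightarrow> j < n \<Longrightarrow> M i j = M' i j"
  shows "det_nat n M = det_nat n M'"
  unfolding det_nat_def
proof (rule sum.cong[OF refl])
  fix \<sigma> assume "\<sigma> \<in> {\<sigma>. \<sigma> permutes {..<n}}"
  then have "\<sigma> i < n" if "i < n" for i using permutes_in_image[of \<sigma> "{..<n}" i] that by auto
  then show "of_int (sign \<sigma>) * (\<Prod>i<n. M i (\<sigma> i)) = of_int (sign \<sigma>) * (\<Prod>i<n. M' i (\<sigma> i))"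
    using assms by auto
qed

definition det_rest :: "nat \<Rightarrow> (nat \<Rightarrow> nat \<Rightarrow> complex) \<Rightarrow> complex" where
  "det_rest n M = (\<Sum>\<sigma> | \<sigma> permutes {..<Suc n} \<and> \<sigma> n \<noteq> n. of_int (sign \<sigma>) * (\<Prod>i<Suc n. M i (\<sigma> i)))"

lemma det_expand_last:
  "det_nat (Suc n) M = M n n * det_nat n M + det_rest n M"
proof -
  let ?A = "{\<sigma>. \<sigma> permutes {..<Suc n}}" and ?B = "{\<sigma>. \<sigma> n = n}"
  let ?g = "\<lambda>\<sigma>. of_int (sign \<sigma>) * (\<Prod>i<Suc n. M i (\<sigma> i))"
  have "finite ?A" by (rule finite_permutations) simp
  then have "det_nat (Suc n) M = sum ?g (?A \<inter> ?B) + sum ?g (?A - ?B)"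
    unfolding det_nat_def by (rule sum.Int_Diff)
  moreover have "?A \<inter> ?B = {\<sigma>. \<sigma> permutes {..<n}}" using permutes_fix_last by blast
  moreover have "sum ?g (?A - ?B) = det_rest n M"
    unfolding det_rest_def by (rule sum.cong) auto
  moreover have "sum ?g {\<sigma>. \<sigma> permutes {..<n}} = M n n * det_nat n M"
    unfolding det_nat_def sum_distrib_left
  proof (rule sum.cong[OF refl])
    fix \<sigma> assume "\<sigma> \<in> {\<sigma>. \<sigma> permutes {..<n}}"
    then have "\<sigma> n = n" using permutes_not_in by fastforce
    then show "?g \<sigma> = M n n * (of_int (sign \<sigma>) * (\<Prod>i<n. M i (\<sigma> i)))" by (simp add: mult_ac)
  qed
  ultimately show ?thesis by simp
qed

lemma det_pole_limit:
  fixes M :: "complex \<Rightarrow> nat \<Rightarrow> nat \<Rightarrow> complex" and g :: "complex \<Rightarrow> complex"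
  assumes cont: "\<And>i j. i \<le> n \<Longrightarrow> j \<le> n \<Longrightarrow> (i, j) \<noteq> (n, n) \<Longrightarrow> isCont (\<lambda>y. M y i j) y0"
    and g: "isCont g y0" "g y0 = 0"
    and pole: "\<forall>\<^sub>F y in at y0. g y * M y n n = 1"
  shows "((\<lambda>y. g y * det_nat (Suc n) (M y)) \<longlongrightarrow> det_nat n (M y0)) (at y0)"
proof -
  have expand: "\<forall>\<^sub>F y in at y0. det_nat n (M y) + g y * det_rest n (M y) = g y * det_nat (Suc n) (M y)"
    using pole by eventually_elim (simp add: det_expand_last distrib_left flip: mult.assoc)
  have "isCont (\<lambda>y. det_nat n (M y)) y0"
    unfolding det_nat_def
  proof (intro continuous_intros cont)
    fix \<sigma> i assume "\<sigma> \<in> {\<sigma>. \<sigma> permutes {..<n}}" "i \<in> {..<n}"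
    then show "i \<le> n" "\<sigma> i \<le> n" "(i, \<sigma> i) \<noteq> (n, n)"
      using permutes_in_image[of \<sigma> "{..<n}" i] by auto
  qed
  moreover have "isCont (\<lambda>y. det_rest n (M y)) y0"
    unfolding det_rest_def
  proof (intro continuous_intros cont)
    fix \<sigma> i assume "\<sigma> \<in> {\<sigma>. \<sigma> permutes {..<Suc n} \<and> \<sigma> n \<noteq> n}" "i \<in> {..<Suc n}"
    then show "i \<le> n" "\<sigma> i \<le> n" "(i, \<sigma> i) \<noteq> (n, n)"
      using permutes_in_image[of \<sigma> "{..<Suc n}" i] by auto
  qed
  ultimately have "isCont (\<lambda>y. det_nat n (M y) + g y * det_rest n (M y)) y0"
    using g(1) by (intro continuous_intros)
  then have "((\<lambda>y. det_nat n (M y) + g y * det_rest n (M y)) \<longlongrightarrow> det_nat n (M y0)) (at y0)"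
    using g(2) by (simp add: isCont_def)
  then show ?thesis
    using expand by (rule tendsto_cong[THEN iffD1, rotated])
qed

section \<open>The limit of H at a pole\<close>

definition hprod :: "complex \<Rightarrow> nat \<Rightarrow> (nat \<Rightarrow> complex) \<Rightarrow> (nat \<Rightarrow> complex) \<Rightarrow> complex" where
  "hprod \<tau> k a b = (\<Prod>i<k. \<Prod>j<k. hfun \<tau> (a i) (b j))"

definition theta_vdm :: "complex \<Rightarrow> nat \<Rightarrow> (nat \<Rightarrow> complex) \<Rightarrow> complex" where
  "theta_vdm \<tau> k a = (\<Prod>i<k. \<Prod>j\<in>{i<..<k}. theta1 \<tau> (a i - a j) * theta1 \<tau> (a i + a j))"

lemma H_eq:
  "H \<tau> k a b = hprod \<tau> k a b / (theta_vdm \<tau> k a * theta_vdm \<tau> k b) * det_nat k (\<lambda>i j. 1 / hfun \<tau> (a i) (b j))"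
  by (simp add: H_def hprod_def theta_vdm_def)

lemma prod_square_Suc:
  "(\<Prod>i<Suc n. \<Prod>j<Suc n. f i j) = (\<Prod>i<n. \<Prod>j<n. f i j) * (\<Prod>i<n. f i n) * (\<Prod>j<n. f n j) * f n n"
  by (simp add: prod.distrib mult_ac)

lemma prod_upper_triangle_Suc:
  "(\<Prod>i<Suc n. \<Prod>j\<in>{i<..<Suc n}. f i j) = (\<Prod>i<n. \<Prod>j\<in>{i<..<n}. f i j) * (\<Prod>i<n. f i n)"
proof -
  have "{i<..<Suc n} = insert n {i<..<n}" if "i < n" for i
    using that by auto
  then have "(\<Prod>i<n. \<Prod>j\<in>{i<..<Suc n}. f i j) = (\<Prod>i<n. (\<Prod>j\<in>{i<..<n}. f i j) * f i n)"
    by (intro prod.cong) (simp_all add: mult.commute)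
  moreover have "{n<..<Suc n} = {}" by auto
  ultimately show ?thesis by (simp add: prod.distrib)
qed

lemma theta_vdm_Suc:
  "theta_vdm \<tau> (Suc n) a = theta_vdm \<tau> n a * (\<Prod>i<n. theta1 \<tau> (a i - a n) * theta1 \<tau> (a i + a n))"
  unfolding theta_vdm_def by (rule prod_upper_triangle_Suc)

lemma isCont_fun_upd_apply [continuous_intros]: "isCont (\<lambda>y. (b(n := y)) i) y0"
  by (cases "i = n") simp_all

lemma H_limit_at_pole:
  assumes tau: "Im \<tau> > 0" and iso: "zeros_isolated (theta1 \<tau>)"
    and pole: "hfun \<tau> (a n) y0 = 0"
    and regular: "\<And>i. i < n \<Longrightarrow> hfun \<tau> (a i) y0 \<noteq> 0"
    and va: "theta_vdm \<tau> (Suc n) a \<noteq> 0" and vb: "theta_vdm \<tau> (Suc n) (b(n := y0)) \<noteq> 0"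
  shows "((\<lambda>y. H \<tau> (Suc n) a (b(n := y))) \<longlongrightarrow>
     hprod \<tau> n a b * (\<Prod>i<n. hfun \<tau> (a i) y0) * (\<Prod>j<n. hfun \<tau> (a n) (b j))
       / (theta_vdm \<tau> (Suc n) a * theta_vdm \<tau> (Suc n) (b(n := y0)))
       * det_nat n (\<lambda>i j. 1 / hfun \<tau> (a i) (b j))) (at y0)"
proof -
  define K where "K y = hprod \<tau> n a b * (\<Prod>i<n. hfun \<tau> (a i) y) * (\<Prod>j<n. hfun \<tau> (a n) (b j))
       / (theta_vdm \<tau> (Suc n) a * theta_vdm \<tau> (Suc n) (b(n := y)))" for y
  define M where "M y = (\<lambda>i j. 1 / hfun \<tau> (a i) ((b(n := y)) j))" for y
  define g where "g y = hfun \<tau> (a n) y" for y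
  have split: "H \<tau> (Suc n) a (b(n := y)) = K y * (g y * det_nat (Suc n) (M y))" for y
    by (simp add: H_eq hprod_def prod_square_Suc K_def M_def g_def prod.distrib mult_ac)
  have isCont_hfun: "isCont (\<lambda>y. hfun \<tau> u (f y)) y0" if "isCont f y0" for u f
    unfolding hfun_def using tau that by (intro continuous_intros)
  have "isCont K y0"
    unfolding K_def theta_vdm_def using tau va vb
    by (intro continuous_intros isCont_hfun) (auto simp: theta_vdm_def)
  moreover have "((\<lambda>y. g y * det_nat (Suc n) (M y)) \<longlongrightarrow> det_nat n (M y0)) (at y0)"
  proof (rule det_pole_limit)
    show "isCont (\<lambda>y. M y i j) y0" if "i \<le> n" "j \<le> n" "(i, j) \<noteq> (n, n)" for i j
      using that regular unfolding M_def by (cases "j = n") (auto intro!: continuous_intros isCont_hfun)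
    show "isCont g y0" "g y0 = 0"
      using pole unfolding g_def by (auto intro: isCont_hfun)
    show "\<forall>\<^sub>F y in at y0. g y * M y n n = 1"
      using hfun_eventually_nonzero[OF iso] by (rule eventually_mono) (simp add: g_def M_def)
  qed
  ultimately have "((\<lambda>y. H \<tau> (Suc n) a (b(n := y))) \<longlongrightarrow> K y0 * det_nat n (M y0)) (at y0)"
    unfolding split isCont_def by (rule tendsto_mult)
  moreover have "det_nat n (M y0) = det_nat n (\<lambda>i j. 1 / hfun \<tau> (a i) (b j))"
    by (rule det_nat_cong) (simp add: M_def)
  ultimately show ?thesis by (simp add: K_def)
qed

lemma prod_neg_mult:
  fixes A B :: "nat \<Rightarrow> 'a :: comm_ring_1"
  shows "(\<Prod>i<n. - A i * B i) = (-1) ^ n * (\<Prod>i<n. A i) * (\<Prod>i<n. B i)"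
  by (induct n) (simp_all add: algebra_simps)

lemma H_limit_at_shift:
  assumes tau: "Im \<tau> > 0" and iso: "zeros_isolated (theta1 \<tau>)" and x: "a n = x"
    and va: "theta_vdm \<tau> (Suc n) a \<noteq> 0" and vb: "theta_vdm \<tau> n b \<noteq> 0"
    and b_ok: "\<And>j. j < n \<Longrightarrow> theta1 \<tau> (b j - (x + eta)) \<noteq> 0 \<and> theta1 \<tau> (b j + (x + eta)) \<noteq> 0"
    and a_ok: "\<And>i. i < n \<Longrightarrow> theta1 \<tau> (x - eta - a i) \<noteq> 0 \<and> theta1 \<tau> (x - eta + a i) \<noteq> 0"
  shows "((\<lambda>y. H \<tau> (Suc n) a (b(n := y))) \<longlongrightarrow>
     (\<Prod>i<n. theta1 \<tau> (x - eta - a i) * theta1 \<tau> (x - eta + a i)) *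
     (\<Prod>j<n. theta1 \<tau> (x - eta - b j) * theta1 \<tau> (x - eta + b j)) * H \<tau> n a b) (at (x + eta))"
proof -
  define T where "T u = theta1 \<tau> (x - eta - u) * theta1 \<tau> (x - eta + u)" for u
  define Xa where "Xa = (\<Prod>i<n. theta1 \<tau> (a i - x) * theta1 \<tau> (a i + x))"
  define Xb where "Xb = (\<Prod>j<n. theta1 \<tau> (b j - (x + eta)) * theta1 \<tau> (b j + (x + eta)))"
  have va': "theta_vdm \<tau> (Suc n) a = theta_vdm \<tau> n a * Xa"
    by (simp add: theta_vdm_Suc Xa_def x)
  have "theta_vdm \<tau> n (b(n := x + eta)) = theta_vdm \<tau> n b"
    unfolding theta_vdm_def by (intro prod.cong) auto
  then have vb': "theta_vdm \<tau> (Suc n) (b(n := x + eta)) = theta_vdm \<tau> n b * Xb"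
    by (simp add: theta_vdm_Suc Xb_def)
  have Xa: "Xa \<noteq> 0" and va_n: "theta_vdm \<tau> n a \<noteq> 0"
    using va va' by auto
  have Xb: "Xb \<noteq> 0"
    using b_ok by (simp add: Xb_def)
  have ha: "(\<Prod>i<n. hfun \<tau> (a i) (x + eta)) = (-1) ^ n * Xa * (\<Prod>i<n. T (a i))"
    unfolding hfun_at_shifted_point[OF tau] prod_neg_mult Xa_def T_def ..
  have hb: "(\<Prod>j<n. hfun \<tau> (a n) (b j)) = (-1) ^ n * Xb * (\<Prod>j<n. T (b j))"
    unfolding x hfun_at_base_point[OF tau] prod_neg_mult Xb_def T_def ..
  have regular: "hfun \<tau> (a i) (x + eta) \<noteq> 0" if "i < n" for i
    using Xa a_ok[OF that] that by (simp add: hfun_at_shifted_point[OF tau] Xa_def)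
  have "((\<lambda>y. H \<tau> (Suc n) a (b(n := y))) \<longlongrightarrow>
     hprod \<tau> n a b * ((-1) ^ n * Xa * (\<Prod>i<n. T (a i))) * ((-1) ^ n * Xb * (\<Prod>j<n. T (b j)))
       / (theta_vdm \<tau> n a * Xa * (theta_vdm \<tau> n b * Xb))
       * det_nat n (\<lambda>i j. 1 / hfun \<tau> (a i) (b j))) (at (x + eta))"
    using H_limit_at_pole[OF tau iso _ regular va, of b] vb vb' Xb
    unfolding ha hb va' by (simp add: x hfun_pole)
  moreover have "(-1 :: complex) ^ n * (-1) ^ n = 1"
    by (simp flip: power_add)
  ultimately show ?thesis
    using Xa Xb va_n vb by (simp add: H_eq T_def field_simps)
qed

section \<open>The exceptional set\<close>

text \<open>Zero sets of theta1 along coordinate combinations are closed and, because the zeros of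
  theta1 are isolated, have empty interior.\<close>

lemma zero_set_coordinate_closed:
  fixes f :: "complex \<Rightarrow> complex"
  assumes "continuous_on UNIV f"
  shows "closed {w :: nat \<Rightarrow> complex. f (c + w p + s * w q) = 0}"
proof (rule closed_Collect_eq)
  have linear: "continuous_on UNIV (\<lambda>w :: nat \<Rightarrow> complex. c + w p + s * w q)"
    by (intro continuous_intros continuous_on_product_coordinates)
  show "continuous_on UNIV (\<lambda>w :: nat \<Rightarrow> complex. f (c + w p + s * w q))"
    using continuous_on_compose2[OF assms linear] by simp
qed simp

lemma zero_set_coordinate_interior:
  fixes f :: "complex \<Rightarrow> complex"
  assumes "zeros_isolated f" and "p \<noteq> q"
  shows "interior {w :: nat \<Rightarrow> complex. f (c + w p + s * w q) = 0} = {}"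
proof (rule ccontr)
  let ?Z = "{w :: nat \<Rightarrow> complex. f (c + w p + s * w q) = 0}"
  assume "interior ?Z \<noteq> {}"
  then obtain w where w: "w \<in> interior ?Z" by blast
  define \<gamma> where "\<gamma> t = w(p := w p + t)" for t
  have "continuous_on UNIV (\<lambda>t. \<gamma> t i)" for i
    by (cases "i = p") (simp_all add: \<gamma>_def continuous_intros)
  then have "continuous_on UNIV \<gamma>"
    by (rule continuous_on_coordinatewise_then_product)
  then have "isCont \<gamma> 0"
    by (simp add: continuous_on_eq_continuous_at)
  then have "(\<gamma> \<longlongrightarrow> w) (at 0)"
    by (simp add: isCont_def \<gamma>_def)
  then have "\<forall>\<^sub>F t in at 0. \<gamma> t \<in> interior ?Z"
    using w by (auto intro: topological_tendstoD)
  then have "\<forall>\<^sub>F t in at 0. \<gamma> t \<in> ?Z"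
    by (rule eventually_mono) (use interior_subset in blast)
  then have "\<forall>\<^sub>F t in at 0. f ((c + w p + s * w q) + 1 * t) = 0"
    by eventually_elim (use assms(2) in \<open>simp add: \<gamma>_def algebra_simps\<close>)
  moreover have "\<forall>\<^sub>F t in at 0. f ((c + w p + s * w q) + 1 * t) \<noteq> 0"
    using zeros_isolated_affine[OF assms(1), of 1] by simp
  ultimately have "\<forall>\<^sub>F t :: complex in at 0. False"
    by eventually_elim simp
  then show False by simp
qed

lemma interior_finite_union_empty:
  assumes "finite F" and "\<And>S. S \<in> F \<Longrightarrow> closed S \<and> interior S = {}"
  shows "interior (\<Union>F) = {}"
  using assms
proof (induction F rule: finite_induct)
  case (insert S F)
  then show ?case
    using interior_closed_Un_empty_interior[of S "\<Union>F"] by simp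
qed simp

text \<open>Outside this finite union all theta factors used by the reduction are nonzero.\<close>

definition exceptional_set :: "complex \<Rightarrow> nat \<Rightarrow> (nat \<Rightarrow> complex) set" where
  "exceptional_set \<tau> m = (\<Union>(c, s, p, q) \<in> {0, eta, -eta} \<times> {1, -1} \<times> {(p, q). p < 2 * m \<and> q < 2 * m \<and> p \<noteq> q}.
     {w. theta1 \<tau> (c + w p + s * w q) = 0})"

lemma exceptional_set_nowhere_dense:
  assumes tau: "Im \<tau> > 0" and iso: "zeros_isolated (theta1 \<tau>)"
  shows "closed (exceptional_set \<tau> m)" and "interior (exceptional_set \<tau> m) = {}"
proof -
  let ?I = "{0, eta, -eta} \<times> {1 :: complex, -1} \<times> {(p, q). p < 2 * m \<and> q < 2 * m \<and> p \<noteq> q}"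
  have "finite {(p, q). p < 2 * m \<and> q < 2 * m \<and> p \<noteq> q}"
    by (rule finite_subset[of _ "{..<2 * m} \<times> {..<2 * m}"]) auto
  then have fin: "finite ?I" by simp
  have cont: "continuous_on UNIV (theta1 \<tau>)"
    using holomorphic_on_imp_continuous_on[OF theta_holomorphic[OF tau]] .
  have member: "closed S \<and> interior S = {}"
    if "S \<in> (\<lambda>(c, s, p, q). {w. theta1 \<tau> (c + w p + s * w q) = 0}) ` ?I" for S
  proof -
    from that obtain c s p q where "p \<noteq> q" and S: "S = {w. theta1 \<tau> (c + w p + s * w q) = 0}"
      by auto
    then show ?thesis
      using zero_set_coordinate_closed[OF cont] zero_set_coordinate_interior[OF iso] by simp
  qed
  show "closed (exceptional_set \<tau> m)"
    unfolding exceptional_set_def using fin member by (intro closed_Union) auto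
  show "interior (exceptional_set \<tau> m) = {}"
    unfolding exceptional_set_def using fin member by (intro interior_finite_union_empty) auto
qed

lemma theta_nonzero_off_exceptional:
  assumes "w \<notin> exceptional_set \<tau> m" and "c \<in> {0, eta, -eta}" and "p < 2 * m" "q < 2 * m" "p \<noteq> q"
  shows "theta1 \<tau> (c + w p - w q) \<noteq> 0" and "theta1 \<tau> (c + w p + w q) \<noteq> 0"
proof -
  have "theta1 \<tau> (c + w p + s * w q) \<noteq> 0" if "s \<in> {1, -1}" for s
    using assms that unfolding exceptional_set_def by blast
  from this[of "-1"] this[of 1] show "theta1 \<tau> (c + w p - w q) \<noteq> 0" "theta1 \<tau> (c + w p + w q) \<noteq> 0"
    by simp_all
qed

lemma prod_index_split:
  assumes m: "m = Suc n"
  shows "(\<Prod>i\<in>{1..2*m-1} - {m}. f i) = (\<Prod>i<n. f (i + 1)) * (\<Prod>j<n. f (m + 1 + j))"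
proof -
  have split: "{1..2*m-1} - {m} = (\<lambda>i. i + 1) ` {..<n} \<union> (\<lambda>j. m + 1 + j) ` {..<n}"
  proof (intro set_eqI iffI)
    fix k assume k: "k \<in> {1..2*m-1} - {m}"
    show "k \<in> (\<lambda>i. i + 1) ` {..<n} \<union> (\<lambda>j. m + 1 + j) ` {..<n}"
    proof (cases "k < m")
      case True
      then have "k = (k - 1) + 1" "k - 1 < n" using k m by auto
      then show ?thesis by blast
    next
      case False
      then have "k = m + 1 + (k - m - 1)" "k - m - 1 < n" using k m by auto
      then show ?thesis by blast
    qed
  qed (use m in auto)
  have "(\<Prod>i\<in>{1..2*m-1} - {m}. f i) = (\<Prod>i\<in>(\<lambda>i. i + 1) ` {..<n}. f i) * (\<Prod>i\<in>(\<lambda>j. m + 1 + j) ` {..<n}. f i)"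
    unfolding split by (rule prod.union_disjoint) (use m in auto)
  also have "\<dots> = (\<Prod>i<n. f (i + 1)) * (\<Prod>j<n. f (m + 1 + j))"
    by (simp add: prod.reindex inj_on_def)
  finally show ?thesis .
qed

lemma H_limit_off_exceptional:
  assumes tau: "Im \<tau> > 0" and iso: "zeros_isolated (theta1 \<tau>)"
    and m: "m = Suc n" and w: "w \<notin> exceptional_set \<tau> m"
  shows "((\<lambda>y. H \<tau> m (\<lambda>i. w (i + 1)) ((\<lambda>j. w (m + 1 + j))(m - 1 := y)))
        \<longlongrightarrow> (\<Prod>i\<in>{1..2*m-1} - {m}. theta1 \<tau> (w m - eta - w i) * theta1 \<tau> (w m - eta + w i))
              * H \<tau> (m - 1) (\<lambda>i. w (i + 1)) (\<lambda>j. w (m + 1 + j)))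
      (at (w m + eta))"
proof -
  note off = theta_nonzero_off_exceptional[OF w]
  have va: "theta_vdm \<tau> (Suc n) (\<lambda>i. w (i + 1)) \<noteq> 0"
    using off[of 0] m by (auto simp: theta_vdm_def)
  have vb: "theta_vdm \<tau> n (\<lambda>j. w (m + 1 + j)) \<noteq> 0"
    using off[of 0] m by (simp add: theta_vdm_def)
  have b_ok: "theta1 \<tau> (w (m + 1 + j) - (w m + eta)) \<noteq> 0 \<and> theta1 \<tau> (w (m + 1 + j) + (w m + eta)) \<noteq> 0"
    if "j < n" for j
    using off(1)[of "-eta" "m + 1 + j" m] off(2)[of eta "m + 1 + j" m] that m
    by (simp add: algebra_simps)
  have a_ok: "theta1 \<tau> (w m - eta - w (i + 1)) \<noteq> 0 \<and> theta1 \<tau> (w m - eta + w (i + 1)) \<noteq> 0"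
    if "i < n" for i
    using off[of "-eta" m "i + 1"] that m by (simp_all add: algebra_simps)
  have "((\<lambda>y. H \<tau> (Suc n) (\<lambda>i. w (i + 1)) ((\<lambda>j. w (m + 1 + j))(n := y))) \<longlongrightarrow>
     (\<Prod>i<n. theta1 \<tau> (w m - eta - w (i + 1)) * theta1 \<tau> (w m - eta + w (i + 1))) *
     (\<Prod>j<n. theta1 \<tau> (w m - eta - w (m + 1 + j)) * theta1 \<tau> (w m - eta + w (m + 1 + j)))
       * H \<tau> n (\<lambda>i. w (i + 1)) (\<lambda>j. w (m + 1 + j))) (at (w m + eta))"
    using H_limit_at_shift[OF tau iso _ va vb] b_ok a_ok m by simp
  then show ?thesis
    unfolding prod_index_split[OF m] using m by simp
qed

theorem mainTheorem3:
  fixes \<tau> :: complex and m :: nat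
  assumes "Im \<tau> > 0" and "m \<ge> 2"
  shows "\<exists>Z :: (nat \<Rightarrow> complex) set. closed Z \<and> interior Z = {} \<and>
    (\<forall>w. w \<notin> Z \<longrightarrow>
      ((\<lambda>y. H \<tau> m (\<lambda>i. w (i + 1)) ((\<lambda>j. w (m + 1 + j))(m - 1 := y)))
        \<longlongrightarrow> (\<Prod>i\<in>{1..2*m-1} - {m}. theta1 \<tau> (w m - eta - w i) * theta1 \<tau> (w m - eta + w i))
              * H \<tau> (m - 1) (\<lambda>i. w (i + 1)) (\<lambda>j. w (m + 1 + j)))
      (at (w m + eta)))"
proof (cases "\<exists>z. theta1 \<tau> z \<noteq> 0")
  case True
  then have iso: "zeros_isolated (theta1 \<tau>)"
    using entire_zeros_isolated[OF theta_holomorphic[OF assms(1)]] by blast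
  obtain n where m: "m = Suc n"
    using assms(2) by (cases m) auto
  show ?thesis
    using exceptional_set_nowhere_dense[OF assms(1) iso] H_limit_off_exceptional[OF assms(1) iso m]
    by blast
next
  case False
  then have "H \<tau> k a b = 0" if "k > 0" for k a b
    using that by (simp add: H_def hfun_def)
  then show ?thesis
    using assms(2) by (intro exI[of _ "{}"]) simp
qed

end
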